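(* Let $H$ be a fixed graph with $k=|V(H)|$ vertices and let $p\in[0,1)$. Then the algorithm $\mathrm{ALG}_p$ for the Delayed $H$-Node-Deletion Problem with predictions is $\bigl(k-p(k-1),\; k+\tfrac{p}{1-p}\bigr)$-competitive; that is, its consistency is at most $k-p(k-1)$ and its robustness is at most $k+p/(1-p)$.
   Context: All graphs are finite, simple and undirected. An induced copy of $H$ in $G$ is an induced subgraph isomorphic to $H$; $G$ is $H$-free if it has none. For $S\subseteq V(G)$, $G-S=G[V(G)\setminus S]$. An online graph $G$ has vertices $v_1,\dots,v_n$ revealed one at a time (with edges to earlier vertices); $G_t=G[\{v_1,\dots,v_t\}]$. Delayed $H$-Node-Deletion Problem: an online algorithm must choose sets $S_1\subseteq S_2\subseteq\dots\subseteq S_n$ with $S_t\subseteq V(G_t)$ such that $G_t-S_t$ is $H$-free for all $t$, where $S_t$ may depend only on $G_t$ (and, with predictions, on $u_1(G),\dots,u_t(G)$). The cost is $|S_n|$. $\mathrm{OPT}(G)$ denotes the minimum size of a set $S\subseteq V(G)$ with $G-S$ $H$-free. Predictions: when $v_t$ is revealed, the algorithm receives a bit $u_t(G)\in\{0,1\}$. The advice is correct if the set of vertices with bit $1$ is a minimum-size set $S$ with $G-S$ $H$-free. An algorithm is $(r,w)$-competitive if there is a constant $\alpha\ge 0$ such that for every online graph $G$: (i) for some correct advice, its cost is at most $r\cdot\mathrm{OPT}(G)+\alpha$, and (ii) for every advice sequence (correct or not), its cost is at most $w\cdot\mathrm{OPT}(G)+\alpha$. The consistency (resp. robustness) is the infimum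 of such $r$ (resp. $w$). Algorithm $\mathrm{ALG}_p$: it maintains counters $d$ and $e$, initially $0$. Deleted vertices are removed permanently. After each vertex is revealed, as long as the remaining graph contains an induced copy of $H$, it picks one such copy (arbitrarily) and applies the first applicable case: (Case 1) If the copy contains no vertex with advice bit $1$ (or such a copy has appeared at some earlier point), then from now on the algorithm deletes all vertices of every copy of $H$ that appears, without changing $d$ or $e$. (Case 2) Else, if $d=0$ or $e/(e+d)>p$: delete all $k$ vertices of the copy and increase $d$ by $1$. (Case 3) Else: delete one vertex of the copy with advice bit $1$ (the earliest-revealed such vertex) and increase $e$ by $1$. This is repeated until the remaining graph is $H$-free before the next vertex is revealed. *)

theory Defs
  imports Main "HOL.Real"
begin

(* Online graph G on vertices 0,1,...,n-1, revealed in this order (vertex t-1 is v_t).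
   E is a symmetric irreflexive edge relation; G_t is G restricted to {0..<t}. *)

definition simple_graph_rel :: "('a \<Rightarrow> 'a \<Rightarrow> bool) \<Rightarrow> 'a set \<Rightarrow> bool" where
  "simple_graph_rel R V \<longleftrightarrow> (\<forall>x\<in>V. \<forall>y\<in>V. R x y \<longrightarrow> R y x) \<and> (\<forall>x\<in>V. \<not> R x x)"

definition induced_copy ::
  "'b set \<Rightarrow> ('b \<Rightarrow> 'b \<Rightarrow> bool) \<Rightarrow> (nat \<Rightarrow> nat \<Rightarrow> bool) \<Rightarrow> nat set \<Rightarrow> bool" where
  "induced_copy VH EH E C \<longleftrightarrow>
     (\<exists>f. bij_betw f VH C \<and> (\<forall>x\<in>VH. \<forall>y\<in>VH. EH x y \<longleftrightarrow> E (f x) (f y)))"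

definition H_free ::
  "'b set \<Rightarrow> ('b \<Rightarrow> 'b \<Rightarrow> bool) \<Rightarrow> (nat \<Rightarrow> nat \<Rightarrow> bool) \<Rightarrow> nat set \<Rightarrow> bool" where
  "H_free VH EH E X \<longleftrightarrow> \<not> (\<exists>C. C \<subseteq> X \<and> induced_copy VH EH E C)"

definition opt ::
  "'b set \<Rightarrow> ('b \<Rightarrow> 'b \<Rightarrow> bool) \<Rightarrow> (nat \<Rightarrow> nat \<Rightarrow> bool) \<Rightarrow> nat \<Rightarrow> nat" where
  "opt VH EH E n = (LEAST m. \<exists>S. S \<subseteq> {0..<n} \<and> card S = m \<and> H_free VH EH E ({0..<n} - S))"

definition correct_advice ::
  "'b set \<Rightarrow> ('b \<Rightarrow> 'b \<Rightarrow> bool) \<Rightarrow> (nat \<Rightarrow> nat \<Rightarrow> bool) \<Rightarrow> nat \<Rightarrow> (nat \<Rightarrow> bool) \<Rightarrow> bool" where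
  "correct_advice VH EH E n u \<longleftrightarrow>
     H_free VH EH E ({0..<n} - {v. v < n \<and> u v}) \<and> card {v. v < n \<and> u v} = opt VH EH E n"

(* State of ALG_p: deleted vertices, counters d and e, and whether Case 1 has been triggered *)
record alg_state =
  deleted :: "nat set"
  dcnt :: nat
  ecnt :: nat
  mode :: bool

(* One iteration of ALG_p while the vertices X = {0..<t} are revealed:
   pick (arbitrarily) an induced copy C of H in the remaining graph and apply the first applicable case *)
inductive alg_step ::
  "'b set \<Rightarrow> ('b \<Rightarrow> 'b \<Rightarrow> bool) \<Rightarrow> (nat \<Rightarrow> nat \<Rightarrow> bool) \<Rightarrow> (nat \<Rightarrow> bool) \<Rightarrow> real \<Rightarrow> nat set
     \<Rightarrow> alg_state \<Rightarrow> alg_state \<Rightarrow> bool"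
  for VH EH E u p X where
  case1: "\<lbrakk> C \<subseteq> X - deleted s; induced_copy VH EH E C; mode s \<or> (\<forall>v\<in>C. \<not> u v) \<rbrakk>
     \<Longrightarrow> alg_step VH EH E u p X s (s\<lparr>deleted := deleted s \<union> C, mode := True\<rparr>)"
| case2: "\<lbrakk> C \<subseteq> X - deleted s; induced_copy VH EH E C; \<not> mode s; \<exists>v\<in>C. u v;
     dcnt s = 0 \<or> real (ecnt s) / real (ecnt s + dcnt s) > p \<rbrakk>
     \<Longrightarrow> alg_step VH EH E u p X s (s\<lparr>deleted := deleted s \<union> C, dcnt := Suc (dcnt s)\<rparr>)"
| case3: "\<lbrakk> C \<subseteq> X - deleted s; induced_copy VH EH E C; \<not> mode s; \<exists>v\<in>C. u v;
     \<not> (dcnt s = 0 \<or> real (ecnt s) / real (ecnt s + dcnt s) > p) \<rbrakk>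
     \<Longrightarrow> alg_step VH EH E u p X s
           (s\<lparr>deleted := insert (Min {v\<in>C. u v}) (deleted s), ecnt := Suc (ecnt s)\<rparr>)"

(* alg_run ... t s: s is a possible state of ALG_p after v_1..v_t have been revealed
   and processed (the remaining graph is H-free) *)
inductive alg_run ::
  "'b set \<Rightarrow> ('b \<Rightarrow> 'b \<Rightarrow> bool) \<Rightarrow> (nat \<Rightarrow> nat \<Rightarrow> bool) \<Rightarrow> (nat \<Rightarrow> bool) \<Rightarrow> real
     \<Rightarrow> nat \<Rightarrow> alg_state \<Rightarrow> bool"
  for VH EH E u p where
  init: "alg_run VH EH E u p 0 \<lparr>deleted = {}, dcnt = 0, ecnt = 0, mode = False\<rparr>"
| reveal: "\<lbrakk> alg_run VH EH E u p t s; (alg_step VH EH E u p {0..<Suc t})\<^sup>*\<^sup>* s s';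
     H_free VH EH E ({0..<Suc t} - deleted s') \<rbrakk>
     \<Longrightarrow> alg_run VH EH E u p (Suc t) s'"

(* ALG_p is (r,w)-competitive (for every choice of copies it makes) *)
definition alg_competitive ::
  "'b set \<Rightarrow> ('b \<Rightarrow> 'b \<Rightarrow> bool) \<Rightarrow> real \<Rightarrow> real \<Rightarrow> real \<Rightarrow> bool" where
  "alg_competitive VH EH p r w \<longleftrightarrow>
     (\<exists>\<alpha>\<ge>0. \<forall>(E :: nat \<Rightarrow> nat \<Rightarrow> bool) n. simple_graph_rel E UNIV \<longrightarrow>
        (\<exists>u. correct_advice VH EH E n u \<and>
             (\<forall>s. alg_run VH EH E u p n s \<longrightarrow>
                  real (card (deleted s)) \<le> r * real (opt VH EH E n) + \<alpha>)) \<and>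
        (\<forall>u s. alg_run VH EH E u p n s \<longrightarrow>
                  real (card (deleted s)) \<le> w * real (opt VH EH E n) + \<alpha>))"

end

theory Submission
  imports Defs
begin

text \<open>For the robustness bound, the copies deleted whole in Cases 1 and 2 are pairwise disjoint, so any
deletion set, in particular an optimal one, meets each of them: at most \<open>OPT\<close> of them were
deleted at a cost of \<open>k\<close> each, \<open>d\<close> is at most their number, and the rule choosing between
Cases 2 and 3 keeps \<open>e \<le> p d/(1 - p) + 1\<close>.
For the consistency bound with the advice marking an optimal set \<open>S\<close>, every copy meets \<open>S\<close>,
so Case 1 never fires, and every step deletes at least one fresh vertex of \<open>S\<close>; thus
\<open>d + e \<le> OPT\<close>, the cost is at most \<open>k d + e\<close>, and the same rule keeps \<open>p (d + e) \<le> e + 1\<close>.\<close>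

lemma induced_copy_card:
  assumes "finite VH" "induced_copy VH EH E C"
  shows "finite C" "card C = card VH"
  using assms unfolding induced_copy_def by (auto simp: bij_betw_same_card bij_betw_finite)

lemma induced_copy_nonempty:
  assumes "VH \<noteq> {}" "induced_copy VH EH E C"
  shows "C \<noteq> {}"
  using assms unfolding induced_copy_def bij_betw_def by auto

lemma H_free_Diff_iff:
  "H_free VH EH E (X - S) \<longleftrightarrow> (\<forall>C \<subseteq> X. induced_copy VH EH E C \<longrightarrow> C \<inter> S \<noteq> {})"
  unfolding H_free_def by blast

lemma opt_deletion_set_exists:
  assumes "VH \<noteq> {}"
  obtains S where "S \<subseteq> {0..<n}" "card S = opt VH EH E n" "H_free VH EH E ({0..<n} - S)"
proof -
  let ?P = "\<lambda>m. \<exists>S. S \<subseteq> {0..<n} \<and> card S = m \<and> H_free VH EH E ({0..<n} - S)"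
  have "H_free VH EH E ({0..<n} - {0..<n})"
    unfolding H_free_def using induced_copy_nonempty[OF assms] by auto
  then have "?P (card {0..<n})" by blast
  then have "?P (opt VH EH E n)" unfolding opt_def by (rule LeastI)
  then show thesis using that by blast
qed

lemma card_le_card_hitting_set:
  assumes "finite S" "pairwise disjnt F" "\<forall>C\<in>F. C \<inter> S \<noteq> {}"
  shows "card F \<le> card S"
proof -
  define pick where "pick C = (SOME v. v \<in> C \<inter> S)" for C
  have pick: "pick C \<in> C \<inter> S" if "C \<in> F" for C
    unfolding pick_def some_in_eq using assms(3) that by auto
  have "inj_on pick F"
  proof (rule inj_onI)
    fix A B assume "A \<in> F" "B \<in> F" "pick A = pick B"
    then have "\<not> disjnt A B" using pick unfolding disjnt_def by fastforce
    then show "A = B" using assms(2) \<open>A \<in> F\<close> \<open>B \<in> F\<close> by (meson pairwiseD)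
  qed
  moreover have "pick ` F \<subseteq> S" using pick by blast
  ultimately show ?thesis using card_inj_on_le assms(1) by blast
qed

definition copy_packing ::
  "'b set \<Rightarrow> ('b \<Rightarrow> 'b \<Rightarrow> bool) \<Rightarrow> (nat \<Rightarrow> nat \<Rightarrow> bool) \<Rightarrow> nat set set \<Rightarrow> bool" where
  "copy_packing VH EH E F \<longleftrightarrow> finite F \<and> pairwise disjnt F \<and> (\<forall>C\<in>F. induced_copy VH EH E C)"

lemma copy_packing_empty: "copy_packing VH EH E {}"
  unfolding copy_packing_def by simp

lemma copy_packing_insert:
  assumes "VH \<noteq> {}" "copy_packing VH EH E F" "\<Union>F \<subseteq> D" "induced_copy VH EH E C" "C \<inter> D = {}"
  shows "copy_packing VH EH E (insert C F)" "card (insert C F) = Suc (card F)"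
proof -
  have "C \<notin> F" using induced_copy_nonempty[OF assms(1,4)] assms(3,5) by blast
  then show "card (insert C F) = Suc (card F)" using assms(2) unfolding copy_packing_def by simp
  show "copy_packing VH EH E (insert C F)"
    using assms(2-5) unfolding copy_packing_def by (auto simp: pairwise_insert disjnt_def)
qed

lemma card_copy_packing_le_opt:
  assumes "VH \<noteq> {}" "copy_packing VH EH E F" "\<Union>F \<subseteq> {0..<n}"
  shows "card F \<le> opt VH EH E n"
proof -
  obtain S where S: "S \<subseteq> {0..<n}" "card S = opt VH EH E n" "H_free VH EH E ({0..<n} - S)"
    using opt_deletion_set_exists[OF assms(1)] .
  have "\<forall>C\<in>F. C \<inter> S \<noteq> {}" using S(3) assms(2,3) unfolding H_free_Diff_iff copy_packing_def by blast
  then show ?thesis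
    using card_le_card_hitting_set[of S F] S(1,2) assms(2) finite_subset
    unfolding copy_packing_def by fastforce
qed

lemma alg_run_invariant:
  assumes "alg_run VH EH E u p t s" "t \<le> n"
    and "P \<lparr>deleted = {}, dcnt = 0, ecnt = 0, mode = False\<rparr>"
    and "\<And>X s s'. X \<subseteq> {0..<n} \<Longrightarrow> alg_step VH EH E u p X s s' \<Longrightarrow> P s \<Longrightarrow> P s'"
  shows "P s"
  using assms(1,2)
proof (induction rule: alg_run.induct)
  case init
  show ?case by (fact assms(3))
next
  case (reveal t s s')
  then have "P s" "{0..<Suc t} \<subseteq> {0..<n}" by auto
  with reveal.hyps(2) show ?case
    by (induction rule: rtranclp_induct) (use assms(4) in blast)+
qed

lemma alg_step_deleted_subset:
  assumes "alg_step VH EH E u p X s s'" "finite X"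
  shows "deleted s' \<subseteq> deleted s \<union> X"
  using assms(1)
proof (cases rule: alg_step.cases)
  case (case3 C)
  have "finite C" using case3 assms(2) finite_subset by blast
  then have "Min {v\<in>C. u v} \<in> C" using case3 Min_in[of "{v\<in>C. u v}"] by auto
  then show ?thesis using case3 by auto
qed auto

lemma alg_run_deleted_subset:
  assumes "alg_run VH EH E u p n s"
  shows "deleted s \<subseteq> {0..<n}"
  using assms order_refl
proof (rule alg_run_invariant)
  fix X s s' assume "X \<subseteq> {0..<n}" "alg_step VH EH E u p X s s'" "deleted s \<subseteq> {0..<n}"
  then show "deleted s' \<subseteq> {0..<n}" using alg_step_deleted_subset[of VH EH E u p X s s'] finite_subset
    by blast
qed simp

text \<open>The two inequalities maintained by the rule choosing between Cases 2 and 3.\<close>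

definition counters_balanced :: "real \<Rightarrow> alg_state \<Rightarrow> bool" where
  "counters_balanced p s \<longleftrightarrow>
     p * (real (dcnt s) + real (ecnt s)) \<le> real (ecnt s) + 1 \<and>
     (1 - p) * real (ecnt s) \<le> p * real (dcnt s) + (1 - p)"

lemma case2_guard_bound:
  assumes "p < 1" "d = 0 \<or> real e / real (e + d) > p"
  shows "p * (real (Suc d) + real e) \<le> real e + 1"
proof (cases "d = 0")
  case True
  have "p * (1 + real e) \<le> 1 * (1 + real e)" using assms(1) by (intro mult_right_mono) auto
  then show ?thesis using True by (simp add: add.commute)
next
  case False
  then have "real e > p * real (e + d)"
    using assms(2) by (simp add: pos_less_divide_eq mult.commute)
  then show ?thesis using assms(1) by (simp add: algebra_simps)
qed

lemma case3_guard_bound: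
  assumes "\<not> (d = 0 \<or> real e / real (e + d) > p)"
  shows "(1 - p) * real (Suc e) \<le> p * real d + (1 - p)"
proof -
  have "real (e + d) > 0" "real e / real (e + d) \<le> p" using assms by auto
  then have "real e \<le> p * real (e + d)" by (simp add: pos_divide_le_eq mult.commute)
  then show ?thesis by (simp add: algebra_simps)
qed

lemma alg_step_counters_balanced:
  assumes "alg_step VH EH E u p X s s'" "0 \<le> p" "p < 1" "counters_balanced p s"
  shows "counters_balanced p s'"
  using assms(1)
proof (cases rule: alg_step.cases)
  case case1
  then show ?thesis using assms(4) unfolding counters_balanced_def by simp
next
  case case2
  have "p * real (dcnt s) \<le> p * real (Suc (dcnt s))" using assms(2) by (simp add: mult_left_mono)
  then show ?thesis
    using case2 assms(4) case2_guard_bound[OF assms(3)] unfolding counters_balanced_def by force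
next
  case case3
  then show ?thesis
    using assms(3,4) case3_guard_bound unfolding counters_balanced_def by (force simp: algebra_simps)
qed

lemma alg_run_counters_balanced:
  assumes "alg_run VH EH E u p n s" "0 \<le> p" "p < 1"
  shows "counters_balanced p s"
  using assms(1) order_refl
proof (rule alg_run_invariant)
  show "counters_balanced p \<lparr>deleted = {}, dcnt = 0, ecnt = 0, mode = False\<rparr>"
    unfolding counters_balanced_def using assms(3) by simp
qed (use alg_step_counters_balanced assms(2,3) in blast)

definition packing_invariant ::
  "'b set \<Rightarrow> ('b \<Rightarrow> 'b \<Rightarrow> bool) \<Rightarrow> (nat \<Rightarrow> nat \<Rightarrow> bool) \<Rightarrow> alg_state \<Rightarrow> bool" where
  "packing_invariant VH EH E s \<longleftrightarrow> finite (deleted s) \<and>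
     (\<exists>F. copy_packing VH EH E F \<and> \<Union>F \<subseteq> deleted s \<and> dcnt s \<le> card F \<and>
          card (deleted s) \<le> card VH * card F + ecnt s)"

lemma alg_step_packing_invariant:
  assumes "alg_step VH EH E u p X s s'" "finite VH" "VH \<noteq> {}" "packing_invariant VH EH E s"
  shows "packing_invariant VH EH E s'"
proof -
  obtain F where F: "copy_packing VH EH E F" "\<Union>F \<subseteq> deleted s" "dcnt s \<le> card F"
    "card (deleted s) \<le> card VH * card F + ecnt s" and fin: "finite (deleted s)"
    using assms(4) unfolding packing_invariant_def by blast
  have whole_copy: "packing_invariant VH EH E s'"
    if C: "C \<subseteq> X - deleted s" "induced_copy VH EH E C"
      and s': "deleted s' = deleted s \<union> C" "dcnt s' \<le> Suc (dcnt s)" "ecnt s' = ecnt s" for C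
  proof -
    have "finite C" "card C = card VH" using induced_copy_card[OF assms(2) C(2)] by auto
    moreover have "C \<inter> deleted s = {}" using C(1) by blast
    note packing = copy_packing_insert[OF assms(3) F(1,2) C(2) this]
    have "card (deleted s \<union> C) \<le> card (deleted s) + card C" by (rule card_Un_le)
    ultimately have "card (deleted s') \<le> card VH * card (insert C F) + ecnt s'"
      using F(4) packing(2) s' by simp
    moreover have "dcnt s' \<le> card (insert C F)" using F(3) packing(2) s'(2) by simp
    moreover have "\<Union>(insert C F) \<subseteq> deleted s'" using F(2) s'(1) by blast
    moreover have "finite (deleted s')" using fin \<open>finite C\<close> s'(1) by simp
    ultimately show ?thesis unfolding packing_invariant_def using packing(1) by blast
  qed
  from assms(1) show ?thesis
  proof (cases rule: alg_step.cases)
    case (case1 C)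
    then show ?thesis using whole_copy[of C] by simp
  next
    case (case2 C)
    then show ?thesis using whole_copy[of C] by simp
  next
    case (case3 C)
    have "card (insert (Min {v\<in>C. u v}) (deleted s)) \<le> Suc (card (deleted s))"
      by (simp add: card_insert_if fin)
    then have "card (deleted s') \<le> card VH * card F + ecnt s'" using case3(1) F(4) by simp
    moreover have "\<Union>F \<subseteq> deleted s'" "dcnt s' \<le> card F" "finite (deleted s')"
      using F(2,3) fin case3(1) by auto
    ultimately show ?thesis unfolding packing_invariant_def using F(1) by blast
  qed
qed

lemma alg_run_packing_invariant:
  assumes "alg_run VH EH E u p n s" "finite VH" "VH \<noteq> {}"
  shows "packing_invariant VH EH E s"
  using assms(1) order_refl
proof (rule alg_run_invariant)
  show "packing_invariant VH EH E \<lparr>deleted = {}, dcnt = 0, ecnt = 0, mode = False\<rparr>"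
    unfolding packing_invariant_def using copy_packing_empty by fastforce
qed (use alg_step_packing_invariant assms(2,3) in blast)

definition hitting_invariant :: "'b set \<Rightarrow> nat set \<Rightarrow> alg_state \<Rightarrow> bool" where
  "hitting_invariant VH S s \<longleftrightarrow> finite (deleted s) \<and> \<not> mode s \<and>
     card (deleted s) \<le> card VH * dcnt s + ecnt s \<and> dcnt s + ecnt s \<le> card (deleted s \<inter> S)"

lemma alg_step_hitting_invariant:
  assumes "alg_step VH EH E (\<lambda>v. v \<in> S) p X s s'" "finite X" "finite VH"
    and hits: "\<forall>C \<subseteq> X. induced_copy VH EH E C \<longrightarrow> C \<inter> S \<noteq> {}"
    and inv: "hitting_invariant VH S s"
  shows "hitting_invariant VH S s'"
proof -
  have fin: "finite (deleted s)" and mode: "\<not> mode s"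
    and cost: "card (deleted s) \<le> card VH * dcnt s + ecnt s"
    and hit: "dcnt s + ecnt s \<le> card (deleted s \<inter> S)"
    using inv unfolding hitting_invariant_def by auto
  from assms(1) show ?thesis
  proof (cases rule: alg_step.cases)
    case (case1 C)
    then show ?thesis using hits mode by blast
  next
    case (case2 C)
    have C: "finite C" "card C = card VH" using induced_copy_card[OF assms(3) case2(3)] by auto
    have "card (deleted s \<union> C) \<le> card (deleted s) + card C" by (rule card_Un_le)
    then have "card (deleted s') \<le> card VH * dcnt s' + ecnt s'" using case2(1) cost C(2) by simp
    have "(deleted s \<union> C) \<inter> S = (deleted s \<inter> S) \<union> (C \<inter> S)" by blast
    moreover have "card ((deleted s \<inter> S) \<union> (C \<inter> S)) = card (deleted s \<inter> S) + card (C \<inter> S)"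
      using fin C(1) case2(2) by (intro card_Un_disjoint) auto
    moreover have "card (C \<inter> S) \<noteq> 0" using C(1) case2(5) by auto
    ultimately have "dcnt s' + ecnt s' \<le> card (deleted s' \<inter> S)" using case2(1) hit by simp
    then show ?thesis
      using \<open>card (deleted s') \<le> _\<close> case2(1) fin C(1) mode unfolding hitting_invariant_def by simp
  next
    case (case3 C)
    let ?m = "Min {v\<in>C. v \<in> S}"
    have "finite C" using case3 assms(2) finite_subset by blast
    then have m: "?m \<in> C \<inter> S" using case3 Min_in[of "{v\<in>C. v \<in> S}"] by auto
    then have "?m \<notin> deleted s" using case3(2) by blast
    then have "card (deleted s') = Suc (card (deleted s))"
      and "card (deleted s' \<inter> S) = Suc (card (deleted s \<inter> S))"
      using case3(1) m fin by (simp_all add: Int_insert_left)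
    then show ?thesis using case3(1) fin mode cost hit unfolding hitting_invariant_def by simp
  qed
qed

lemma alg_run_hitting_invariant:
  assumes "alg_run VH EH E (\<lambda>v. v \<in> S) p n s" "finite VH"
    and "H_free VH EH E ({0..<n} - S)"
  shows "hitting_invariant VH S s"
  using assms(1) order_refl
proof (rule alg_run_invariant)
  show "hitting_invariant VH S \<lparr>deleted = {}, dcnt = 0, ecnt = 0, mode = False\<rparr>"
    unfolding hitting_invariant_def by simp
  fix X s s'
  assume X: "X \<subseteq> {0..<n}" and step: "alg_step VH EH E (\<lambda>v. v \<in> S) p X s s'"
    and inv: "hitting_invariant VH S s"
  have "finite X" using X finite_subset by blast
  moreover have "\<forall>C \<subseteq> X. induced_copy VH EH E C \<longrightarrow> C \<inter> S \<noteq> {}"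
    using assms(3) X unfolding H_free_Diff_iff by (meson subset_trans)
  ultimately show "hitting_invariant VH S s'"
    using alg_step_hitting_invariant[OF step _ assms(2) _ inv] by blast
qed

lemma consistency_bound:
  assumes "finite VH" "VH \<noteq> {}" "0 \<le> p" "p < 1"
    and S: "S \<subseteq> {0..<n}" "card S = opt VH EH E n" "H_free VH EH E ({0..<n} - S)"
    and run: "alg_run VH EH E (\<lambda>v. v \<in> S) p n s"
  shows "real (card (deleted s)) \<le>
           (real (card VH) - p * (real (card VH) - 1)) * real (opt VH EH E n) + (real (card VH) - 1)"
proof -
  define k d e where "k = real (card VH)" "d = real (dcnt s)" "e = real (ecnt s)"
  have k: "k \<ge> 1" using assms(1,2) unfolding k_d_e_def by (simp add: Suc_leI card_gt_0_iff)
  have cost: "real (card (deleted s)) \<le> k * d + e"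
    and "dcnt s + ecnt s \<le> card (deleted s \<inter> S)"
    using alg_run_hitting_invariant[OF run assms(1) S(3)]
    unfolding hitting_invariant_def k_d_e_def by (auto simp flip: of_nat_mult of_nat_add)
  moreover have "card (deleted s \<inter> S) \<le> card S" using S(1) finite_subset by (intro card_mono) auto
  ultimately have steps: "d + e \<le> real (opt VH EH E n)" using S(2) unfolding k_d_e_def by linarith
  have "p * (d + e) \<le> e + 1"
    using alg_run_counters_balanced[OF run assms(3,4)] unfolding counters_balanced_def k_d_e_def by blast
  then have "(k - 1) * (p * (d + e) - 1) \<le> (k - 1) * e" using k by (intro mult_left_mono) auto
  then have "real (card (deleted s)) \<le> (k - p * (k - 1)) * (d + e) + (k - 1)"
    using cost by (simp add: algebra_simps)
  also have "\<dots> \<le> (k - p * (k - 1)) * real (opt VH EH E n) + (k - 1)"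
  proof -
    have "p * (k - 1) \<le> 1 * (k - 1)" using assms(4) k by (intro mult_right_mono) auto
    then show ?thesis using steps by (intro add_right_mono mult_left_mono) auto
  qed
  finally show ?thesis unfolding k_d_e_def .
qed

lemma robustness_bound:
  assumes "finite VH" "VH \<noteq> {}" "0 \<le> p" "p < 1"
    and run: "alg_run VH EH E u p n s"
  shows "real (card (deleted s)) \<le> (real (card VH) + p / (1 - p)) * real (opt VH EH E n) + 1"
proof -
  obtain F where F: "copy_packing VH EH E F" "\<Union>F \<subseteq> deleted s" "dcnt s \<le> card F"
    "card (deleted s) \<le> card VH * card F + ecnt s"
    using alg_run_packing_invariant[OF run assms(1,2)] unfolding packing_invariant_def by blast
  have F_opt: "card F \<le> opt VH EH E n"
    using card_copy_packing_le_opt[OF assms(2) F(1)] F(2) alg_run_deleted_subset[OF run] by blast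
  define k f where "k = real (card VH)" "f = real (card F)"
  have p1: "1 - p > 0" using assms(4) by simp
  have "(1 - p) * real (ecnt s) \<le> p * real (dcnt s) + (1 - p)"
    using alg_run_counters_balanced[OF run assms(3,4)] unfolding counters_balanced_def by blast
  then have "real (ecnt s) \<le> p * real (dcnt s) / (1 - p) + 1"
    using p1 by (simp add: field_simps)
  also have "\<dots> \<le> p * f / (1 - p) + 1"
    using F(3) assms(3) p1 unfolding k_f_def by (intro add_right_mono divide_right_mono mult_left_mono) auto
  finally have e: "real (ecnt s) \<le> p * f / (1 - p) + 1" .
  have "real (card (deleted s)) \<le> k * f + real (ecnt s)"
    using F(4) unfolding k_f_def by (metis of_nat_add of_nat_le_iff of_nat_mult)
  also have "\<dots> \<le> (k + p / (1 - p)) * f + 1" using e by (simp add: algebra_simps)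
  also have "\<dots> \<le> (k + p / (1 - p)) * real (opt VH EH E n) + 1"
    using F_opt p1 assms(3) unfolding k_f_def by (intro add_right_mono mult_left_mono) auto
  finally show ?thesis unfolding k_f_def .
qed

theorem mainTheorem3:
  fixes VH :: "'b set" and EH :: "'b \<Rightarrow> 'b \<Rightarrow> bool" and p :: real
  assumes "finite VH" and "VH \<noteq> {}" and "simple_graph_rel EH VH"
    and "0 \<le> p" and "p < 1"
  shows "alg_competitive VH EH p (real (card VH) - p * (real (card VH) - 1))
                                 (real (card VH) + p / (1 - p))"
  unfolding alg_competitive_def
proof (intro exI[of _ "real (card VH) + 1"] conjI allI impI)
  fix E :: "nat \<Rightarrow> nat \<Rightarrow> bool" and n
  obtain S where S: "S \<subseteq> {0..<n}" "card S = opt VH EH E n" "H_free VH EH E ({0..<n} - S)"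
    using opt_deletion_set_exists[OF assms(2)] .
  have "{v. v < n \<and> v \<in> S} = S" using S(1) by auto
  then have "correct_advice VH EH E n (\<lambda>v. v \<in> S)" unfolding correct_advice_def using S by simp
  then show "\<exists>u. correct_advice VH EH E n u \<and> (\<forall>s. alg_run VH EH E u p n s \<longrightarrow>
      real (card (deleted s)) \<le> (real (card VH) - p * (real (card VH) - 1)) * real (opt VH EH E n)
                                 + (real (card VH) + 1))"
    using consistency_bound[OF assms(1,2,4,5) S] by (intro exI[of _ "\<lambda>v. v \<in> S"]) force
  fix u s assume "alg_run VH EH E u p n s"
  then show "real (card (deleted s)) \<le> (real (card VH) + p / (1 - p)) * real (opt VH EH E n)
                                         + (real (card VH) + 1)"
    using robustness_bound[OF assms(1,2,4,5)] by force
qed simp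

end
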